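(* Let $\mathcal{H}$ be a finite-dimensional complex Hilbert space, let $\ket{\psi_1},\ket{\psi_2}\in\mathcal{H}$ be pure states, let $\rho=\tfrac12(\ket{\psi_1}\!\bra{\psi_1}+\ket{\psi_2}\!\bra{\psi_2})$, and let $\alpha,\beta\in[0,1]$. Then for every ontological model (as defined in the context) for these preparations, $$\tfrac12\,\omega_\Lambda(\psi_1,\psi_2;\alpha,\beta)\le 2(1+\beta)-(1-\alpha)D_Q(\psi_1,\psi_2)-D_Q\big(\{\psi_1,\tfrac{1+\beta}{2}\},\{\rho,\alpha+\beta\}\big)-D_Q\big(\{\psi_2,\tfrac{1+\beta}{2}\},\{\rho,\alpha+\beta\}\big).$$
   Context: For a state $\sigma$ and POVM $\mathcal{M}=\{M_k\}$, $p(k|\sigma,\mathcal{M})=\mathrm{Tr}(\sigma M_k)$. Weighted distinguishability: for states $\phi_1,\phi_2$ and weights $w_1,w_2\ge0$, $D_Q(\{\phi_1,w_1\},\{\phi_2,w_2\})=\max_{\mathcal{M}}\big(w_1p(1|\phi_1,\mathcal{M})+w_2p(2|\phi_2,\mathcal{M})\big)$ over all two-outcome POVMs $\mathcal{M}=\{M_1,M_2\}$; $D_Q(\psi_1,\psi_2)=D_Q(\{\psi_1,\tfrac12\},\{\psi_2,\tfrac12\})$. Ontological model: a measure space $(\Lambda,d\lambda)$; for each preparation $\sigma\in\{\psi_1,\psi_2,\rho\}$ a probability density $\mu(\lambda|\sigma)\ge0$ with $\int_\Lambda\mu(\lambda|\sigma)d\lambda=1$; for each $n$-outcome POVM $\mathcal{M}=\{M_k\}$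 response functions $\xi(k|\lambda,\mathcal{M})\ge0$ with $\sum_k\xi(k|\lambda,\mathcal{M})=1$ for all $\lambda$; such that $\mathrm{Tr}(\sigma M_k)=\int_\Lambda\mu(\lambda|\sigma)\xi(k|\lambda,\mathcal{M})d\lambda$ for all such $\sigma,\mathcal{M},k$. Moreover $\mu(\lambda|\rho)=\tfrac12(\mu(\lambda|\psi_1)+\mu(\lambda|\psi_2))$ for all $\lambda$. Generalized epistemic overlap: with $\tilde\mu_1=(1+\beta)\mu(\cdot|\psi_1)$, $\tilde\mu_2=(1+\beta)\mu(\cdot|\psi_2)$, $\tilde\mu_3=(\alpha+\beta)(\mu(\cdot|\psi_1)+\mu(\cdot|\psi_2))$, $\omega_\Lambda(\psi_1,\psi_2;\alpha,\beta)=\int_\Lambda\min(\tilde\mu_1,\tilde\mu_2)d\lambda+\int_\Lambda\min(\tilde\mu_1,\tilde\mu_3)d\lambda+\int_\Lambda\min(\tilde\mu_2,\tilde\mu_3)d\lambda-2(\alpha+\beta)-\int_\Lambda\min(\tilde\mu_1,\tilde\mu_2,\tilde\mu_3)d\lambda$. *)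

theory Defs
  imports "HOL-Probability.Probability" "Jordan_Normal_Form.Matrix"
begin

text \<open>The Hilbert space is C^d (any finite dimension d). Vectors and operators are
  represented by Jordan_Normal_Form vectors/matrices of dimension d.\<close>

definition pure_state :: "nat \<Rightarrow> complex vec \<Rightarrow> bool" where
  "pure_state d \<psi> \<longleftrightarrow> \<psi> \<in> carrier_vec d \<and> (\<Sum>i<d. (cmod (\<psi> $ i))\<^sup>2) = 1"

definition proj :: "nat \<Rightarrow> complex vec \<Rightarrow> complex mat" where
  "proj d \<psi> = mat d d (\<lambda>(i,j). \<psi> $ i * cnj (\<psi> $ j))"

definition psd :: "nat \<Rightarrow> complex mat \<Rightarrow> bool" where
  "psd d A \<longleftrightarrow> A \<in> carrier_mat d d
     \<and> (\<forall>i<d. \<forall>j<d. A $$ (j,i) = cnj (A $$ (i,j)))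
     \<and> (\<forall>v \<in> carrier_vec d.
          Im (\<Sum>i<d. \<Sum>j<d. cnj (v $ i) * A $$ (i,j) * v $ j) = 0
        \<and> 0 \<le> Re (\<Sum>i<d. \<Sum>j<d. cnj (v $ i) * A $$ (i,j) * v $ j))"

definition is_povm :: "nat \<Rightarrow> complex mat list \<Rightarrow> bool" where
  "is_povm d Ms \<longleftrightarrow> Ms \<noteq> [] \<and> (\<forall>M \<in> set Ms. psd d M)
     \<and> (\<forall>i<d. \<forall>j<d. (\<Sum>k<length Ms. (Ms ! k) $$ (i,j)) = (if i = j then 1 else 0))"

text \<open>p(k|sigma,M) = Tr(sigma M_k), trace written as the sum of diagonal entries.\<close>
definition qprob :: "complex mat \<Rightarrow> complex mat \<Rightarrow> complex" where
  "qprob \<sigma> M = (\<Sum>i < dim_row \<sigma>. (\<sigma> * M) $$ (i,i))"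

definition DQ :: "nat \<Rightarrow> complex mat \<Rightarrow> real \<Rightarrow> complex mat \<Rightarrow> real \<Rightarrow> real" where
  "DQ d \<phi>1 w1 \<phi>2 w2 = Sup {w1 * Re (qprob \<phi>1 M1) + w2 * Re (qprob \<phi>2 M2) | M1 M2. is_povm d [M1, M2]}"

definition rho_mix :: "nat \<Rightarrow> complex vec \<Rightarrow> complex vec \<Rightarrow> complex mat" where
  "rho_mix d \<psi>1 \<psi>2 = (1/2 :: complex) \<cdot>\<^sub>m (proj d \<psi>1 + proj d \<psi>2)"

definition prob_density :: "'l measure \<Rightarrow> ('l \<Rightarrow> real) \<Rightarrow> bool" where
  "prob_density L \<mu> \<longleftrightarrow> \<mu> \<in> borel_measurable L \<and> (\<forall>l \<in> space L. 0 \<le> \<mu> l)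
     \<and> integrable L \<mu> \<and> integral\<^sup>L L \<mu> = 1"

text \<open>Ontological model for the preparations psi1, psi2, rho (densities mu1, mu2, mur)
  and all POVMs (response functions xi Ms k for outcome k < length Ms).\<close>
definition ontological_model ::
  "nat \<Rightarrow> complex vec \<Rightarrow> complex vec \<Rightarrow> 'l measure \<Rightarrow> ('l \<Rightarrow> real) \<Rightarrow> ('l \<Rightarrow> real) \<Rightarrow> ('l \<Rightarrow> real)
    \<Rightarrow> (complex mat list \<Rightarrow> nat \<Rightarrow> 'l \<Rightarrow> real) \<Rightarrow> bool" where
  "ontological_model d \<psi>1 \<psi>2 L \<mu>1 \<mu>2 \<mu>r \<xi> \<longleftrightarrow>
     prob_density L \<mu>1 \<and> prob_density L \<mu>2 \<and> prob_density L \<mu>r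
   \<and> (\<forall>Ms. is_povm d Ms \<longrightarrow>
        (\<forall>k < length Ms. \<xi> Ms k \<in> borel_measurable L \<and> (\<forall>l \<in> space L. 0 \<le> \<xi> Ms k l))
      \<and> (\<forall>l \<in> space L. (\<Sum>k < length Ms. \<xi> Ms k l) = 1)
      \<and> (\<forall>k < length Ms.
            qprob (proj d \<psi>1) (Ms ! k) = complex_of_real (\<integral>l. \<mu>1 l * \<xi> Ms k l \<partial>L)
          \<and> qprob (proj d \<psi>2) (Ms ! k) = complex_of_real (\<integral>l. \<mu>2 l * \<xi> Ms k l \<partial>L)
          \<and> qprob (rho_mix d \<psi>1 \<psi>2) (Ms ! k) = complex_of_real (\<integral>l. \<mu>r l * \<xi> Ms k l \<partial>L)))
   \<and> (\<forall>l \<in> space L. \<mu>r l = (\<mu>1 l + \<mu>2 l) / 2)"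

definition omega :: "'l measure \<Rightarrow> ('l \<Rightarrow> real) \<Rightarrow> ('l \<Rightarrow> real) \<Rightarrow> real \<Rightarrow> real \<Rightarrow> real" where
  "omega L \<mu>1 \<mu>2 \<alpha> \<beta> =
    (let m1 = (\<lambda>l. (1 + \<beta>) * \<mu>1 l);
         m2 = (\<lambda>l. (1 + \<beta>) * \<mu>2 l);
         m3 = (\<lambda>l. (\<alpha> + \<beta>) * (\<mu>1 l + \<mu>2 l))
     in (\<integral>l. min (m1 l) (m2 l) \<partial>L) + (\<integral>l. min (m1 l) (m3 l) \<partial>L) + (\<integral>l. min (m2 l) (m3 l) \<partial>L)
        - 2 * (\<alpha> + \<beta>) - (\<integral>l. min (m1 l) (min (m2 l) (m3 l)) \<partial>L))"

end

theory Submission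
  imports Defs
begin

(*
  A two-outcome measurement is simulated by response functions xi0 + xi1 = 1, so its weighted
  success probability w1 * int mu_a xi0 + w2 * int mu_b xi1 is at most int max (w1 mu_a) (w2 mu_b)
  = w1 + w2 - int min (w1 mu_a) (w2 mu_b): weighted distinguishability is bounded by the weights
  minus the weighted ontological overlap. Applied to the pairs (psi1, psi2), (psi1, rho) and
  (psi2, rho), with mu_rho = (mu1 + mu2) / 2, this controls the three pairwise overlaps in omega,
  while the triple overlap is at least (alpha + beta) * int min mu1 mu2.
*)

definition response_functions ::
  "nat \<Rightarrow> 'l measure \<Rightarrow> (complex mat list \<Rightarrow> nat \<Rightarrow> 'l \<Rightarrow> real) \<Rightarrow> bool" where
  "response_functions d L \<xi> \<longleftrightarrow> (\<forall>Ms. is_povm d Ms \<longrightarrow>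
     (\<forall>k < length Ms. \<xi> Ms k \<in> borel_measurable L \<and> (\<forall>l \<in> space L. 0 \<le> \<xi> Ms k l))
   \<and> (\<forall>l \<in> space L. (\<Sum>k < length Ms. \<xi> Ms k l) = 1))"

definition reproduces_statistics ::
  "nat \<Rightarrow> 'l measure \<Rightarrow> (complex mat list \<Rightarrow> nat \<Rightarrow> 'l \<Rightarrow> real) \<Rightarrow> complex mat \<Rightarrow> ('l \<Rightarrow> real) \<Rightarrow> bool" where
  "reproduces_statistics d L \<xi> \<sigma> \<mu> \<longleftrightarrow> (\<forall>Ms. is_povm d Ms \<longrightarrow>
     (\<forall>k < length Ms. qprob \<sigma> (Ms ! k) = complex_of_real (\<integral>l. \<mu> l * \<xi> Ms k l \<partial>L)))"

lemma ontological_modelD: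
  assumes "ontological_model d \<psi>1 \<psi>2 L \<mu>1 \<mu>2 \<mu>r \<xi>"
  shows "prob_density L \<mu>1" "prob_density L \<mu>2" "prob_density L \<mu>r"
    and "\<forall>l \<in> space L. \<mu>r l = (\<mu>1 l + \<mu>2 l) / 2"
    and "response_functions d L \<xi>"
    and "reproduces_statistics d L \<xi> (proj d \<psi>1) \<mu>1" "reproduces_statistics d L \<xi> (proj d \<psi>2) \<mu>2"
    and "reproduces_statistics d L \<xi> (rho_mix d \<psi>1 \<psi>2) \<mu>r"
  using assms unfolding ontological_model_def response_functions_def reproduces_statistics_def
  by blast+

lemma psd_one_mat: "psd d (1\<^sub>m d)"
proof -
  have "(\<Sum>j<d. cnj (v $ i) * 1\<^sub>m d $$ (i,j) * v $ j) = of_real ((cmod (v $ i))\<^sup>2)"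
    if "i < d" for v :: "complex vec" and i
  proof -
    have "(\<Sum>j<d. cnj (v $ i) * 1\<^sub>m d $$ (i,j) * v $ j)
        = (\<Sum>j<d. if i = j then cnj (v $ i) * v $ j else 0)"
      using that by (intro sum.cong) auto
    also have "\<dots> = v $ i * cnj (v $ i)"
      using that by simp
    finally show ?thesis
      by (simp only: complex_norm_square)
  qed
  then show ?thesis
    unfolding psd_def by (simp add: sum_nonneg Re_sum Im_sum)
qed

lemma is_povm_one_zero: "is_povm d [1\<^sub>m d, 0\<^sub>m d d]"
proof -
  have "psd d (0\<^sub>m d d)"
    unfolding psd_def by simp
  with psd_one_mat show ?thesis
    unfolding is_povm_def by (auto simp: numeral_2_eq_2)
qed

lemma integrable_mult_unit_interval:
  fixes f x :: "'l \<Rightarrow> real"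
  assumes "integrable M f" "x \<in> borel_measurable M"
    and "\<And>l. l \<in> space M \<Longrightarrow> 0 \<le> x l \<and> x l \<le> 1"
  shows "integrable M (\<lambda>l. f l * x l)"
proof (rule Bochner_Integration.integrable_bound[OF assms(1)])
  show "(\<lambda>l. f l * x l) \<in> borel_measurable M"
    using assms by measurable
  show "AE l in M. norm (f l * x l) \<le> norm (f l)"
    using assms(3) by (intro AE_I2) (simp add: abs_mult mult_left_le)
qed

lemma integral_two_outcome_response_le:
  fixes f g x1 x2 :: "'l \<Rightarrow> real"
  assumes f: "integrable M f" and g: "integrable M g"
    and x: "x1 \<in> borel_measurable M" "x2 \<in> borel_measurable M"
    and resp: "\<And>l. l \<in> space M \<Longrightarrow> 0 \<le> x1 l \<and> 0 \<le> x2 l \<and> x1 l + x2 l = 1"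
  shows "(\<integral>l. f l * x1 l \<partial>M) + (\<integral>l. g l * x2 l \<partial>M)
           \<le> integral\<^sup>L M f + integral\<^sup>L M g - (\<integral>l. min (f l) (g l) \<partial>M)"
proof -
  have fx: "integrable M (\<lambda>l. f l * x1 l)" and gx: "integrable M (\<lambda>l. g l * x2 l)"
    using resp by (fastforce intro!: integrable_mult_unit_interval f g x)+
  have "(\<integral>l. f l * x1 l \<partial>M) + (\<integral>l. g l * x2 l \<partial>M) = (\<integral>l. f l * x1 l + g l * x2 l \<partial>M)"
    using fx gx by simp
  also have "\<dots> \<le> (\<integral>l. f l + g l - min (f l) (g l) \<partial>M)"
  proof (rule integral_mono)
    fix l assume "l \<in> space M"
    then have "0 \<le> x1 l" "0 \<le> x2 l" "x1 l + x2 l = 1"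
      using resp by auto
    then have "f l * x1 l + g l * x2 l \<le> max (f l) (g l) * x1 l + max (f l) (g l) * x2 l"
      by (intro add_mono mult_right_mono) auto
    also have "\<dots> = max (f l) (g l)"
      using \<open>x1 l + x2 l = 1\<close> by (simp flip: distrib_left)
    finally show "f l * x1 l + g l * x2 l \<le> f l + g l - min (f l) (g l)"
      by (auto simp: max_def min_def split: if_splits)
  qed (use f g fx gx in auto)
  also have "\<dots> = integral\<^sup>L M f + integral\<^sup>L M g - (\<integral>l. min (f l) (g l) \<partial>M)"
    using f g by simp
  finally show ?thesis .
qed

lemma integral_min_divide:
  fixes f g :: "'a \<Rightarrow> real"
  assumes "0 \<le> c"
  shows "(\<integral>x. min (f x / c) (g x / c) \<partial>M) = (\<integral>x. min (f x) (g x) \<partial>M) / c"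
proof -
  have "(\<lambda>x. min (f x / c) (g x / c)) = (\<lambda>x. min (f x) (g x) / c)"
    using assms by (simp add: min_divide_distrib_right)
  then show ?thesis
    by simp
qed

lemma DQ_le_overlap:
  assumes \<xi>: "response_functions d L \<xi>"
    and a: "reproduces_statistics d L \<xi> \<phi>a \<nu>a" "prob_density L \<nu>a"
    and b: "reproduces_statistics d L \<xi> \<phi>b \<nu>b" "prob_density L \<nu>b"
  shows "DQ d \<phi>a w1 \<phi>b w2 \<le> w1 + w2 - (\<integral>l. min (w1 * \<nu>a l) (w2 * \<nu>b l) \<partial>L)"
  unfolding DQ_def
proof (rule cSup_least)
  show "{w1 * Re (qprob \<phi>a M1) + w2 * Re (qprob \<phi>b M2) | M1 M2. is_povm d [M1, M2]} \<noteq> {}"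
    using is_povm_one_zero by blast
  fix p assume "p \<in> {w1 * Re (qprob \<phi>a M1) + w2 * Re (qprob \<phi>b M2) | M1 M2. is_povm d [M1, M2]}"
  then obtain M1 M2 where povm: "is_povm d [M1, M2]"
    and p: "p = w1 * Re (qprob \<phi>a M1) + w2 * Re (qprob \<phi>b M2)"
    by blast
  let ?x = "\<xi> [M1, M2]"
  have x: "?x 0 \<in> borel_measurable L" "?x 1 \<in> borel_measurable L"
    and resp: "\<And>l. l \<in> space L \<Longrightarrow> 0 \<le> ?x 0 l \<and> 0 \<le> ?x 1 l \<and> ?x 0 l + ?x 1 l = 1"
    using \<xi> povm unfolding response_functions_def by (force simp: numeral_2_eq_2)+
  have "p = (\<integral>l. w1 * \<nu>a l * ?x 0 l \<partial>L) + (\<integral>l. w2 * \<nu>b l * ?x 1 l \<partial>L)"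
    using a(1) b(1) povm unfolding p reproduces_statistics_def
    by (force simp: mult.assoc)
  also have "\<dots> \<le> (\<integral>l. w1 * \<nu>a l \<partial>L) + (\<integral>l. w2 * \<nu>b l \<partial>L) - (\<integral>l. min (w1 * \<nu>a l) (w2 * \<nu>b l) \<partial>L)"
    using a(2) b(2) x resp unfolding prob_density_def
    by (intro integral_two_outcome_response_le) auto
  also have "\<dots> = w1 + w2 - (\<integral>l. min (w1 * \<nu>a l) (w2 * \<nu>b l) \<partial>L)"
    using a(2) b(2) unfolding prob_density_def by simp
  finally show "p \<le> w1 + w2 - (\<integral>l. min (w1 * \<nu>a l) (w2 * \<nu>b l) \<partial>L)" .
qed

lemma omega_le_pairwise_overlaps:
  assumes \<mu>1: "prob_density L \<mu>1" and \<mu>2: "prob_density L \<mu>2"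
    and "0 \<le> \<alpha> + \<beta>" "\<alpha> \<le> 1"
  shows "omega L \<mu>1 \<mu>2 \<alpha> \<beta> \<le> (1 - \<alpha>) * (\<integral>l. min (\<mu>1 l) (\<mu>2 l) \<partial>L)
           + (\<integral>l. min ((1 + \<beta>) * \<mu>1 l) ((\<alpha> + \<beta>) * (\<mu>1 l + \<mu>2 l)) \<partial>L)
           + (\<integral>l. min ((1 + \<beta>) * \<mu>2 l) ((\<alpha> + \<beta>) * (\<mu>1 l + \<mu>2 l)) \<partial>L)
           - 2 * (\<alpha> + \<beta>)"
proof -
  let ?I = "\<integral>l. min (\<mu>1 l) (\<mu>2 l) \<partial>L"
  have int: "integrable L \<mu>1" "integrable L \<mu>2"
    and nonneg: "\<And>l. l \<in> space L \<Longrightarrow> 0 \<le> \<mu>1 l \<and> 0 \<le> \<mu>2 l"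
    using \<mu>1 \<mu>2 unfolding prob_density_def by auto
  have "(\<lambda>l. min ((1 + \<beta>) * \<mu>1 l) ((1 + \<beta>) * \<mu>2 l)) = (\<lambda>l. (1 + \<beta>) * min (\<mu>1 l) (\<mu>2 l))"
    using assms(3,4) by (simp add: min_mult_distrib_left)
  then have "(\<integral>l. min ((1 + \<beta>) * \<mu>1 l) ((1 + \<beta>) * \<mu>2 l) \<partial>L) = (1 + \<beta>) * ?I"
    by simp
  moreover have "(\<alpha> + \<beta>) * ?I \<le> (\<integral>l. min ((1 + \<beta>) * \<mu>1 l)
      (min ((1 + \<beta>) * \<mu>2 l) ((\<alpha> + \<beta>) * (\<mu>1 l + \<mu>2 l))) \<partial>L)"
  proof -
    have "(\<alpha> + \<beta>) * ?I = (\<integral>l. (\<alpha> + \<beta>) * min (\<mu>1 l) (\<mu>2 l) \<partial>L)"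
      by simp
    also have "\<dots> \<le> (\<integral>l. min ((1 + \<beta>) * \<mu>1 l)
        (min ((1 + \<beta>) * \<mu>2 l) ((\<alpha> + \<beta>) * (\<mu>1 l + \<mu>2 l))) \<partial>L)"
    proof (rule integral_mono)
      fix l assume "l \<in> space L"
      then have "0 \<le> \<mu>1 l" "0 \<le> \<mu>2 l"
        using nonneg by auto
      with assms(3,4) show "(\<alpha> + \<beta>) * min (\<mu>1 l) (\<mu>2 l) \<le> min ((1 + \<beta>) * \<mu>1 l)
          (min ((1 + \<beta>) * \<mu>2 l) ((\<alpha> + \<beta>) * (\<mu>1 l + \<mu>2 l)))"
        by (auto simp: min_def intro: mult_mono mult_left_mono)
    qed (use int in auto)
    finally show ?thesis .
  qed
  ultimately show ?thesis
    unfolding omega_def Let_def by (simp add: algebra_simps)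
qed

theorem lemma1:
  fixes d :: nat and \<psi>1 \<psi>2 :: "complex vec" and \<alpha> \<beta> :: real
    and L :: "'l measure" and \<mu>1 \<mu>2 \<mu>r :: "'l \<Rightarrow> real"
    and \<xi> :: "complex mat list \<Rightarrow> nat \<Rightarrow> 'l \<Rightarrow> real"
  assumes "pure_state d \<psi>1" and "pure_state d \<psi>2"
    and "0 \<le> \<alpha>" and "\<alpha> \<le> 1" and "0 \<le> \<beta>" and "\<beta> \<le> 1"
    and "ontological_model d \<psi>1 \<psi>2 L \<mu>1 \<mu>2 \<mu>r \<xi>"
  shows "omega L \<mu>1 \<mu>2 \<alpha> \<beta> / 2 \<le>
           2 * (1 + \<beta>) - (1 - \<alpha>) * DQ d (proj d \<psi>1) (1/2) (proj d \<psi>2) (1/2)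
           - DQ d (proj d \<psi>1) ((1 + \<beta>) / 2) (rho_mix d \<psi>1 \<psi>2) (\<alpha> + \<beta>)
           - DQ d (proj d \<psi>2) ((1 + \<beta>) / 2) (rho_mix d \<psi>1 \<psi>2) (\<alpha> + \<beta>)"
proof -
  note densities = ontological_modelD(1-3)[OF assms(7)]
    and \<mu>r_mixture = ontological_modelD(4)[OF assms(7)]
    and responses = ontological_modelD(5)[OF assms(7)]
    and reproduces = ontological_modelD(6-8)[OF assms(7)]
  let ?I = "\<integral>l. min (\<mu>1 l) (\<mu>2 l) \<partial>L"
  let ?m3 = "\<lambda>l. (\<alpha> + \<beta>) * (\<mu>1 l + \<mu>2 l)"
  have DQ_\<rho>: "DQ d \<sigma> ((1 + \<beta>) / 2) (rho_mix d \<psi>1 \<psi>2) (\<alpha> + \<beta>)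
      \<le> (1 + \<beta>) / 2 + (\<alpha> + \<beta>) - (\<integral>l. min ((1 + \<beta>) * \<mu> l) (?m3 l) \<partial>L) / 2"
    if "reproduces_statistics d L \<xi> \<sigma> \<mu>" "prob_density L \<mu>" for \<sigma> \<mu>
  proof -
    have "(\<integral>l. min ((1 + \<beta>) / 2 * \<mu> l) ((\<alpha> + \<beta>) * \<mu>r l) \<partial>L)
        = (\<integral>l. min ((1 + \<beta>) * \<mu> l) (?m3 l) \<partial>L) / 2"
      by (subst integral_min_divide[symmetric], simp, intro Bochner_Integration.integral_cong)
        (simp_all add: \<mu>r_mixture)
    with DQ_le_overlap[OF responses that reproduces(3) densities(3)] show ?thesis
      by metis
  qed
  have "DQ d (proj d \<psi>1) (1/2) (proj d \<psi>2) (1/2) \<le> 1 - ?I / 2"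
    using DQ_le_overlap[OF responses reproduces(1) densities(1) reproduces(2) densities(2), of "1/2" "1/2"]
      integral_min_divide[where c = 2 and f = \<mu>1 and g = \<mu>2]
    by simp
  then have "(1 - \<alpha>) * DQ d (proj d \<psi>1) (1/2) (proj d \<psi>2) (1/2) \<le> (1 - \<alpha>) * (1 - ?I / 2)"
    using assms(4) by (intro mult_left_mono) auto
  moreover note DQ_\<rho>[OF reproduces(1) densities(1)] DQ_\<rho>[OF reproduces(2) densities(2)]
  moreover have "omega L \<mu>1 \<mu>2 \<alpha> \<beta> \<le> (1 - \<alpha>) * ?I
      + (\<integral>l. min ((1 + \<beta>) * \<mu>1 l) (?m3 l) \<partial>L) + (\<integral>l. min ((1 + \<beta>) * \<mu>2 l) (?m3 l) \<partial>L)
      - 2 * (\<alpha> + \<beta>)"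
    using omega_le_pairwise_overlaps[OF densities(1,2)] assms(3-5) by simp
  ultimately show ?thesis
    by (simp add: field_simps)
qed

end
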